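(* Let $p\ge q$ and $n\ge 1$ be positive integers and let $B$ be a $p\times q$ matrix. Let $C$ be the $(nq+p)\times(nq+p)$ block matrix $$C=\begin{bmatrix} 0 & B & B & \cdots & B\\ B^T & 0 & I & \cdots & I\\ B^T & I & 0 & \cdots & I\\ \vdots & \vdots & \vdots & \ddots & \vdots\\ B^T & I & I & \cdots & 0\end{bmatrix}$$ (one block of size $p$ followed by $n$ blocks of size $q$; the $q$-blocks are $0$ on the block diagonal and $I_q$ off it), and let $D$ be the $(np+q)\times(np+q)$ block matrix $$D=\begin{bmatrix} 0 & B^T & B^T & \cdots & B^T\\ B & 0 & I & \cdots & I\\ B & I & 0 & \cdots & I\\ \vdots & \vdots & \vdots & \ddots & \vdots\\ B & I & I & \cdots & 0\end{bmatrix}$$ (one block of size $q$ followed by $n$ blocks of size $p$; the $p$-blocks are $0$ on the block diagonal and $I_p$ off it). Then $C$ has $-1$ as an eigenvalue with multiplicity at least $(n-1)q$, and $D$ has $-1$ as an eigenvalue with multiplicity at least $(n-1)p$.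
   Context: $I$ denotes an identity matrix and $0$ a zero matrix of appropriate size. *)

theory Defs
  imports "Jordan_Normal_Form.Char_Poly"
begin

text \<open>For an a x b matrix M, blk_mat n M is the (a + n*b) x (a + n*b) block matrix
  with one leading block of size a (zero), followed by n blocks of size b. First block column: 0, M^T, ..., M^T.\<close>
definition blk_mat :: "nat \<Rightarrow> 'a::{zero,one} mat \<Rightarrow> 'a mat" where
  "blk_mat n M = (let a = dim_row M; b = dim_col M in
     mat (a + n * b) (a + n * b) (\<lambda>(i, j).
       if i < a then (if j < a then 0 else M $$ (i, (j - a) mod b))
       else if j < a then M $$ (j, (i - a) mod b)
       else if (i - a) div b = (j - a) div b then 0
       else if (i - a) mod b = (j - a) mod b then 1 else 0))"

end

theory Submission imports Defs begin

text \<open>Let \<open>C = blk_mat n M\<close> with \<open>M\<close> of size \<open>a \<times> b\<close>.  For every index \<open>i\<close> in one of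
  the first \<open>n - 1\<close> blocks of size \<open>b\<close>, rows \<open>i\<close> and \<open>i + b\<close> of \<open>C\<close> differ by
  \<open>e (i + b) - e i\<close>, i.e. \<open>e i - e (i + b)\<close> is a left eigenvector of \<open>C\<close> for the eigenvalue \<open>-1\<close>.
  Subtracting row \<open>i + b\<close> from row \<open>i\<close> of \<open>X I - C\<close> for all these \<open>(n - 1) b\<close> indices at once
  is a unit upper triangular row operation, after which each of these rows is divisible by
  \<open>X + 1\<close>.  Hence \<open>(X + 1) ^ ((n - 1) b)\<close> divides the characteristic polynomial of \<open>C\<close>.
  Both claims are instances, for \<open>M = B\<close> and \<open>M = B\<^sup>T\<close>.\<close>

lemma det_dvd_of_rows_dvd:
  fixes A :: "'a::comm_ring_1 mat"
  assumes A: "A \<in> carrier_mat N N" and S: "S \<subseteq> {0..<N}"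
    and rows_dvd: "\<And>i j. i \<in> S \<Longrightarrow> j < N \<Longrightarrow> f dvd A $$ (i, j)"
  shows "f ^ card S dvd det A"
proof -
  have "f ^ card S dvd (\<Prod>i = 0..<N. A $$ (i, p i))" if p: "p permutes {0..<N}" for p
  proof -
    have "f ^ card S = (\<Prod>i\<in>S. f)" by simp
    also have "\<dots> dvd (\<Prod>i\<in>S. A $$ (i, p i))"
      using S p by (intro prod_dvd_prod rows_dvd) (auto simp: permutes_in_image)
    also have "\<dots> dvd (\<Prod>i = 0..<N. A $$ (i, p i))"
      using S by (intro prod_dvd_prod_subset) auto
    finally show ?thesis .
  qed
  then show ?thesis
    using A unfolding det_def by (auto intro: dvd_sum dvd_mult)
qed

lemma char_poly_dvd_of_row_differences:
  fixes C :: "'a::comm_ring_1 mat" and \<sigma> :: "nat \<Rightarrow> nat"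
  assumes C: "C \<in> carrier_mat N N" and S: "S \<subseteq> {0..<N}"
    and \<sigma>: "\<And>i. i \<in> S \<Longrightarrow> i < \<sigma> i \<and> \<sigma> i < N"
    and row_diff: "\<And>i j. i \<in> S \<Longrightarrow> j < N \<Longrightarrow>
      C $$ (i, j) - C $$ (\<sigma> i, j) = c * ((if j = i then 1 else 0) - (if j = \<sigma> i then 1 else 0))"
  shows "[:-c, 1:] ^ card S dvd char_poly C"
proof -
  define A where "A = char_poly_matrix C"
  define E :: "'a poly mat" where
    "E = mat N N (\<lambda>(i, k). (if k = i then 1 else 0) - (if i \<in> S \<and> k = \<sigma> i then 1 else 0))"
  have A: "A \<in> carrier_mat N N" and E: "E \<in> carrier_mat N N"
    using C unfolding A_def E_def by auto
  have "det E = 1"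
  proof -
    have "upper_triangular E"
      using \<sigma> unfolding upper_triangular_def E_def by fastforce
    moreover have "diag_mat E = replicate N 1"
      using \<sigma> unfolding diag_mat_def E_def by (fastforce simp: list_eq_iff_nth_eq)
    ultimately show ?thesis
      using det_upper_triangular[OF _ E] by simp
  qed
  then have "det (E * A) = char_poly C"
    using det_mult[OF E A] unfolding A_def char_poly_def by simp
  moreover have "[:-c, 1:] dvd (E * A) $$ (i, j)" if i: "i \<in> S" and j: "j < N" for i j
  proof -
    define \<delta> :: 'a where "\<delta> = (if j = i then 1 else 0) - (if j = \<sigma> i then 1 else 0)"
    have iN: "i < N" "\<sigma> i < N" using S \<sigma> i by auto
    have "(E * A) $$ (i, j) = (\<Sum>k = 0..<N. E $$ (i, k) * A $$ (k, j))"
      using E A iN j by (simp add: scalar_prod_def)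
    also have "\<dots> = (\<Sum>k = 0..<N. (if k = i then A $$ (k, j) else 0) - (if k = \<sigma> i then A $$ (k, j) else 0))"
      using i iN \<sigma>[OF i] by (intro sum.cong) (auto simp: E_def)
    also have "\<dots> = A $$ (i, j) - A $$ (\<sigma> i, j)"
      using iN by (simp add: sum_subtractf)
    also have "\<dots> = [:0, 1:] * [:\<delta>:] - [:C $$ (i, j) - C $$ (\<sigma> i, j):]"
      using C iN j \<sigma>[OF i] by (auto simp: A_def char_poly_matrix_def \<delta>_def one_pCons)
    also have "\<dots> = [:-c, 1:] * [:\<delta>:]"
      using row_diff[OF i j] by (simp add: \<delta>_def[symmetric])
    finally show ?thesis by (simp only: dvd_triv_left)
  qed
  ultimately show ?thesis
    using det_dvd_of_rows_dvd[OF _ S] E A by (metis mult_carrier_mat)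
qed

lemma mult_add_eq_mult_add_iff:
  fixes r s b :: nat
  assumes "r < b" and "s < b"
  shows "\<alpha> * b + r = \<beta> * b + s \<longleftrightarrow> \<alpha> = \<beta> \<and> r = s"
proof
  assume eq: "\<alpha> * b + r = \<beta> * b + s"
  have "\<alpha> = (\<alpha> * b + r) div b" "\<beta> = (\<beta> * b + s) div b"
    "r = (\<alpha> * b + r) mod b" "s = (\<beta> * b + s) mod b"
    using assms by simp_all
  then show "\<alpha> = \<beta> \<and> r = s" unfolding eq by simp
qed simp

lemma mult_add_less_mult:
  fixes r b :: nat
  assumes "\<alpha> < n" and "r < b"
  shows "\<alpha> * b + r < n * b"
proof -
  have "\<alpha> * b + r < Suc \<alpha> * b" using assms(2) by simp
  also have "\<dots> \<le> n * b" using assms(1) by (intro mult_le_mono1) simp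
  finally show ?thesis .
qed

lemma block_index_cases:
  fixes x a b n :: nat
  assumes "a \<le> x" and "x < a + n * b"
  obtains \<alpha> r where "\<alpha> < n" "r < b" "x = a + \<alpha> * b + r"
proof
  have "b > 0" using assms by (cases b) auto
  then show "(x - a) mod b < b" by simp
  show "(x - a) div b < n"
    using assms by (intro less_mult_imp_div_less) simp
  show "x = a + (x - a) div b * b + (x - a) mod b"
    using assms by simp
qed

lemma blk_mat_carrier:
  "M \<in> carrier_mat a b \<Longrightarrow> blk_mat n M \<in> carrier_mat (a + n * b) (a + n * b)"
  unfolding blk_mat_def Let_def by simp

lemma blk_mat_block_entry:
  assumes M: "M \<in> carrier_mat a b" and "\<alpha> < n" "\<beta> < n" "r < b" "s < b"
  shows "blk_mat n M $$ (a + \<alpha> * b + r, a + \<beta> * b + s) =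
    (if \<alpha> = \<beta> then 0 else if r = s then 1 else 0)"
  using assms mult_add_less_mult[of \<alpha> n r b] mult_add_less_mult[of \<beta> n s b]
  unfolding blk_mat_def Let_def by (simp add: add.assoc)

lemma blk_mat_leading_column_entry:
  assumes M: "M \<in> carrier_mat a b" and "\<alpha> < n" "r < b" "j < a"
  shows "blk_mat n M $$ (a + \<alpha> * b + r, j) = M $$ (j, r)"
  using assms mult_add_less_mult[of \<alpha> n r b]
  unfolding blk_mat_def Let_def by (simp add: add.assoc)

lemma blk_mat_row_diff:
  fixes M :: "'a::comm_ring_1 mat"
  assumes M: "M \<in> carrier_mat a b"
    and i: "a \<le> i" "i < a + (n - 1) * b" and j: "j < a + n * b"
  shows "blk_mat n M $$ (i, j) - blk_mat n M $$ (i + b, j) =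
    (if j = i + b then 1 else 0) - (if j = i then 1 else 0)"
proof -
  obtain \<alpha> r where "\<alpha> < n - 1" and r: "r < b" and i_eq: "i = a + \<alpha> * b + r"
    using i by (rule block_index_cases)
  then have \<alpha>: "\<alpha> + 1 < n" by simp
  have ib_eq: "i + b = a + (\<alpha> + 1) * b + r"
    using i_eq by simp
  show ?thesis
  proof (cases "j < a")
    case True
    have "blk_mat n M $$ (i, j) = M $$ (j, r)"
      unfolding i_eq using M \<alpha> r True by (intro blk_mat_leading_column_entry) simp_all
    moreover have "blk_mat n M $$ (i + b, j) = M $$ (j, r)"
      unfolding ib_eq using M \<alpha> r True by (rule blk_mat_leading_column_entry)
    ultimately show ?thesis
      using True i by simp
  next
    case False
    then have "a \<le> j" by simp
    then obtain \<beta> s where \<beta>: "\<beta> < n" and s: "s < b" and j_eq: "j = a + \<beta> * b + s"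
      using j by (rule block_index_cases)
    have "blk_mat n M $$ (i, j) = (if \<alpha> = \<beta> then 0 else if r = s then 1 else 0)"
      unfolding i_eq j_eq using M \<alpha> \<beta> r s by (intro blk_mat_block_entry) simp_all
    moreover have "blk_mat n M $$ (i + b, j) = (if \<alpha> + 1 = \<beta> then 0 else if r = s then 1 else 0)"
      unfolding ib_eq j_eq using M \<alpha> \<beta> r s by (rule blk_mat_block_entry)
    moreover have "j = i \<longleftrightarrow> \<beta> = \<alpha> \<and> s = r"
      unfolding i_eq j_eq by (simp only: add.assoc add_left_cancel mult_add_eq_mult_add_iff[OF s r])
    moreover have "j = i + b \<longleftrightarrow> \<beta> = \<alpha> + 1 \<and> s = r"
      unfolding ib_eq j_eq by (simp only: add.assoc add_left_cancel mult_add_eq_mult_add_iff[OF s r])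
    ultimately show ?thesis
      by auto
  qed
qed

lemma order_char_poly_blk_mat:
  fixes M :: "'a::idom mat"
  assumes M: "M \<in> carrier_mat a b"
  shows "(n - 1) * b \<le> order (-1) (char_poly (blk_mat n M))"
proof -
  let ?S = "{a..<a + (n - 1) * b}"
  have C: "blk_mat n M \<in> carrier_mat (a + n * b) (a + n * b)"
    using M by (rule blk_mat_carrier)
  have shift_bound: "i + b < a + n * b" if "i \<in> ?S" for i
  proof -
    from that have "n * b = (n - 1) * b + b" by (cases n) auto
    with that show ?thesis by simp
  qed
  have "(n - 1) * b \<le> n * b" by simp
  then have "[:-(-1), 1:] ^ card ?S dvd char_poly (blk_mat n M)"
    using M shift_bound
    by (intro char_poly_dvd_of_row_differences[OF C, where \<sigma> = "\<lambda>i. i + b"])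
      (auto intro!: Nat.gr0I simp: blk_mat_row_diff)
  moreover have "char_poly (blk_mat n M) \<noteq> 0"
    using degree_monic_char_poly[OF C] by auto
  moreover have "card ?S = (n - 1) * b" by simp
  ultimately show ?thesis
    using order_max by metis
qed

theorem lemma3p10:
  fixes p q n :: nat and B :: "real mat"
  assumes "q \<ge> 1" and "p \<ge> q" and "n \<ge> 1"
    and "B \<in> carrier_mat p q"
  shows "order (-1) (char_poly (blk_mat n B)) \<ge> (n - 1) * q \<and>
    order (-1) (char_poly (blk_mat n (transpose_mat B))) \<ge> (n - 1) * p"
proof -
  have "transpose_mat B \<in> carrier_mat q p"
    using assms(4) by simp
  with order_char_poly_blk_mat[OF assms(4)] order_char_poly_blk_mat[OF this]
  show ?thesis by simp
qed

end
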